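(* Let $1\to A\to B\to C\to1$ be a short exact sequence of groups, $p$ a prime, $j\ge0$, and $\mathcal{T}$ a directed set of subgroups of $B$ (for $U_1,U_2\in\mathcal{T}$ there is $U\in\mathcal{T}$ with $U\subseteq U_1\cap U_2$). Suppose each $H_j(U\cap A,\mathbb{F}_p)$, $U\in\mathcal{T}$, is finite and $\varprojlim_{U\in\mathcal{T}}H_j(U\cap A,\mathbb{F}_p)=0$. Then for every $i\ge0$, $\varprojlim_{U\in\mathcal{T}}H_i\big(U/(U\cap A),H_j(U\cap A,\mathbb{F}_p)\big)=0$.
   Context: All inverse systems are indexed by inclusion in $\mathcal{T}$, with transition maps induced by the inclusions $U_1\subseteq U_2$ (on $U\cap A$ and on $U/(U\cap A)\subseteq C$). The group $U/(U\cap A)$ acts on $H_j(U\cap A,\mathbb{F}_p)$ via conjugation. *)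

theory Defs
  imports "HOL-Algebra.Algebra"
begin

text \<open>Coefficient modules are abelian groups M (HOL-Algebra, written
multiplicatively) with a left action phi of G.  The n-chains are the finitely
supported functions from G^n (lists of length n) to M.\<close>

definition bar_lists :: "('g,'a) monoid_scheme \<Rightarrow> nat \<Rightarrow> 'g list set" where
  "bar_lists G n = {x. length x = n \<and> set x \<subseteq> carrier G}"

definition supp :: "('m,'b) monoid_scheme \<Rightarrow> ('x \<Rightarrow> 'm) \<Rightarrow> 'x set" where
  "supp M f = {x. f x \<noteq> \<one>\<^bsub>M\<^esub>}"

definition bar_chains :: "('g,'a) monoid_scheme \<Rightarrow> ('m,'b) monoid_scheme \<Rightarrow> nat \<Rightarrow> ('g list \<Rightarrow> 'm) monoid" where
  "bar_chains G M n =
     \<lparr> carrier = {f. (\<forall>x. f x \<in> carrier M) \<and> supp M f \<subseteq> bar_lists G n \<and> finite (supp M f)},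
       monoid.mult = (\<lambda>f g x. f x \<otimes>\<^bsub>M\<^esub> g x),
       one = (\<lambda>x. \<one>\<^bsub>M\<^esub>) \<rparr>"

definition single :: "('m,'b) monoid_scheme \<Rightarrow> 'x \<Rightarrow> 'm \<Rightarrow> 'x \<Rightarrow> 'm" where
  "single M x m = (\<lambda>y. if y = x then m else \<one>\<^bsub>M\<^esub>)"

definition bar_face :: "('g,'a) monoid_scheme \<Rightarrow> nat \<Rightarrow> nat \<Rightarrow> 'g list \<Rightarrow> 'g list" where
  "bar_face G n i x =
     (if i = 0 then tl x
      else if i = n then butlast x
      else take (i - 1) x @ [x ! (i - 1) \<otimes>\<^bsub>G\<^esub> x ! i] @ drop (i + 1) x)"

definition bar_coef :: "('g,'a) monoid_scheme \<Rightarrow> ('m,'b) monoid_scheme \<Rightarrow> ('g \<Rightarrow> 'm \<Rightarrow> 'm)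
      \<Rightarrow> nat \<Rightarrow> 'g list \<Rightarrow> 'm \<Rightarrow> 'm" where
  "bar_coef G M \<phi> i x m =
     (if i = 0 then \<phi> (inv\<^bsub>G\<^esub> (hd x)) m
      else if even i then m else inv\<^bsub>M\<^esub> m)"

text \<open>Boundary d_n : C_n \<rightarrow> C_(n-1) (used for n \<ge> 1).\<close>
definition bar_bd :: "('g,'a) monoid_scheme \<Rightarrow> ('m,'b) monoid_scheme \<Rightarrow> ('g \<Rightarrow> 'm \<Rightarrow> 'm)
      \<Rightarrow> nat \<Rightarrow> ('g list \<Rightarrow> 'm) \<Rightarrow> ('g list \<Rightarrow> 'm)" where
  "bar_bd G M \<phi> n f =
     finprod (bar_chains G M (n - 1))
       (\<lambda>x. finprod (bar_chains G M (n - 1))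
              (\<lambda>i. single M (bar_face G n i x) (bar_coef G M \<phi> i x (f x))) {0..n})
       (supp M f)"

definition bar_cycles :: "('g,'a) monoid_scheme \<Rightarrow> ('m,'b) monoid_scheme \<Rightarrow> ('g \<Rightarrow> 'm \<Rightarrow> 'm)
      \<Rightarrow> nat \<Rightarrow> ('g list \<Rightarrow> 'm) set" where
  "bar_cycles G M \<phi> n =
     (if n = 0 then carrier (bar_chains G M 0)
      else {f \<in> carrier (bar_chains G M n). bar_bd G M \<phi> n f = \<one>\<^bsub>bar_chains G M (n - 1)\<^esub>})"

definition bar_boundaries :: "('g,'a) monoid_scheme \<Rightarrow> ('m,'b) monoid_scheme \<Rightarrow> ('g \<Rightarrow> 'm \<Rightarrow> 'm)
      \<Rightarrow> nat \<Rightarrow> ('g list \<Rightarrow> 'm) set" where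
  "bar_boundaries G M \<phi> n = bar_bd G M \<phi> (Suc n) ` carrier (bar_chains G M (Suc n))"

text \<open>H_n(G, M) = Z_n / B_n, as a HOL-Algebra quotient group (elements are cosets).\<close>
definition group_homology :: "('g,'a) monoid_scheme \<Rightarrow> ('m,'b) monoid_scheme \<Rightarrow> ('g \<Rightarrow> 'm \<Rightarrow> 'm)
      \<Rightarrow> nat \<Rightarrow> ('g list \<Rightarrow> 'm) set monoid" where
  "group_homology G M \<phi> n =
     ((bar_chains G M n)\<lparr>carrier := bar_cycles G M \<phi> n\<rparr>) Mod (bar_boundaries G M \<phi> n)"

definition bar_push :: "('g,'a) monoid_scheme \<Rightarrow> ('m,'b) monoid_scheme \<Rightarrow> ('h,'c) monoid_scheme
      \<Rightarrow> ('n,'d) monoid_scheme \<Rightarrow> nat \<Rightarrow> ('g \<Rightarrow> 'h) \<Rightarrow> ('m \<Rightarrow> 'n)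
      \<Rightarrow> ('g list \<Rightarrow> 'm) \<Rightarrow> ('h list \<Rightarrow> 'n)" where
  "bar_push G M G' M' n \<alpha> \<beta> f =
     finprod (bar_chains G' M' n) (\<lambda>x. single M' (map \<alpha> x) (\<beta> (f x))) (supp M f)"

definition homology_map :: "('h,'c) monoid_scheme \<Rightarrow> ('n,'d) monoid_scheme \<Rightarrow> ('h \<Rightarrow> 'n \<Rightarrow> 'n)
      \<Rightarrow> nat \<Rightarrow> (('g list \<Rightarrow> 'm) \<Rightarrow> ('h list \<Rightarrow> 'n)) \<Rightarrow> ('g list \<Rightarrow> 'm) set \<Rightarrow> ('h list \<Rightarrow> 'n) set" where
  "homology_map G' M' \<phi>' n F K =
     bar_boundaries G' M' \<phi>' n #>\<^bsub>bar_chains G' M' n\<^esub> F (SOME k. k \<in> K)"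

text \<open>The inverse limit over T (maps pi U1 U2 : H U1 \<rightarrow> H U2 for U1 \<subseteq> U2) is the
group of compatible families; it is zero iff every compatible family is trivial.\<close>
definition inv_lim_zero :: "'i set set \<Rightarrow> ('i set \<Rightarrow> ('e,'b) monoid_scheme)
      \<Rightarrow> ('i set \<Rightarrow> 'i set \<Rightarrow> 'e \<Rightarrow> 'e) \<Rightarrow> bool" where
  "inv_lim_zero T H \<pi> \<longleftrightarrow>
     (\<forall>x. (\<forall>U\<in>T. x U \<in> carrier (H U)) \<and>
          (\<forall>U1\<in>T. \<forall>U2\<in>T. U1 \<subseteq> U2 \<longrightarrow> \<pi> U1 U2 (x U1) = x U2)
        \<longrightarrow> (\<forall>U\<in>T. x U = \<one>\<^bsub>H U\<^esub>))"

abbreviation Fp :: "nat \<Rightarrow> int set monoid" where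
  "Fp p \<equiv> add_monoid (ZFact (int p))"

definition H_in :: "('g,'a) monoid_scheme \<Rightarrow> 'g set \<Rightarrow> nat \<Rightarrow> nat \<Rightarrow> 'g set
      \<Rightarrow> ('g list \<Rightarrow> int set) set monoid" where
  "H_in B A p j U = group_homology (B\<lparr>carrier := U \<inter> A\<rparr>) (Fp p) (\<lambda>g m. m) j"

definition H_in_map :: "('g,'a) monoid_scheme \<Rightarrow> 'g set \<Rightarrow> nat \<Rightarrow> nat \<Rightarrow> 'g set \<Rightarrow> 'g set
      \<Rightarrow> ('g list \<Rightarrow> int set) set \<Rightarrow> ('g list \<Rightarrow> int set) set" where
  "H_in_map B A p j U1 U2 =
     homology_map (B\<lparr>carrier := U2 \<inter> A\<rparr>) (Fp p) (\<lambda>g m. m) j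
       (bar_push (B\<lparr>carrier := U1 \<inter> A\<rparr>) (Fp p) (B\<lparr>carrier := U2 \<inter> A\<rparr>) (Fp p) j id id)"

definition Quo :: "('g,'a) monoid_scheme \<Rightarrow> 'g set \<Rightarrow> 'g set \<Rightarrow> 'g set monoid" where
  "Quo B A U = (B\<lparr>carrier := U\<rparr>) Mod (U \<inter> A)"

definition conj_act :: "('g,'a) monoid_scheme \<Rightarrow> 'g set \<Rightarrow> nat \<Rightarrow> nat \<Rightarrow> 'g set
      \<Rightarrow> 'g set \<Rightarrow> ('g list \<Rightarrow> int set) set \<Rightarrow> ('g list \<Rightarrow> int set) set" where
  "conj_act B A p j U c =
     (let u = (SOME u. u \<in> c) in
      homology_map (B\<lparr>carrier := U \<inter> A\<rparr>) (Fp p) (\<lambda>g m. m) j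
        (bar_push (B\<lparr>carrier := U \<inter> A\<rparr>) (Fp p) (B\<lparr>carrier := U \<inter> A\<rparr>) (Fp p) j
           (\<lambda>g. u \<otimes>\<^bsub>B\<^esub> g \<otimes>\<^bsub>B\<^esub> inv\<^bsub>B\<^esub> u) id))"

definition H_out :: "('g,'a) monoid_scheme \<Rightarrow> 'g set \<Rightarrow> nat \<Rightarrow> nat \<Rightarrow> nat \<Rightarrow> 'g set
      \<Rightarrow> ('g set list \<Rightarrow> ('g list \<Rightarrow> int set) set) set monoid" where
  "H_out B A p i j U = group_homology (Quo B A U) (H_in B A p j U) (conj_act B A p j U) i"

definition H_out_map :: "('g,'a) monoid_scheme \<Rightarrow> 'g set \<Rightarrow> nat \<Rightarrow> nat \<Rightarrow> nat \<Rightarrow> 'g set \<Rightarrow> 'g set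
      \<Rightarrow> ('g set list \<Rightarrow> ('g list \<Rightarrow> int set) set) set
      \<Rightarrow> ('g set list \<Rightarrow> ('g list \<Rightarrow> int set) set) set" where
  "H_out_map B A p i j U1 U2 =
     homology_map (Quo B A U2) (H_in B A p j U2) (conj_act B A p j U2) i
       (bar_push (Quo B A U1) (H_in B A p j U1) (Quo B A U2) (H_in B A p j U2) i
          (\<lambda>c. (U2 \<inter> A) <#>\<^bsub>B\<^esub> c) (H_in_map B A p j U1 U2))"

end

theory Submission
  imports Defs "HOL-Analysis.Analysis"
begin

text \<open>Fix \<open>U \<in> \<T>\<close>. The groups \<open>H\<^sub>j(V \<inter> A, \<bbbF>\<^sub>p)\<close> are finite and have vanishing
  inverse limit, so a compactness (Mittag-Leffler) argument yields \<open>V \<subseteq> U\<close> in \<open>\<T>\<close> such that the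
  transition map \<open>H\<^sub>j(V \<inter> A, \<bbbF>\<^sub>p) \<rightarrow> H\<^sub>j(U \<inter> A, \<bbbF>\<^sub>p)\<close> is zero. The transition map of the
  outer system from \<open>V\<close> to \<open>U\<close> is induced on bar chains by this zero map of coefficients, so it
  is zero as well; hence every compatible family of the outer system vanishes at \<open>U\<close>.\<close>

section \<open>A Mittag-Leffler argument\<close>

text \<open>A constraint \<open>(k, l, S)\<close> asks that the coordinates \<open>x k\<close> and \<open>x l\<close> of a point of
  \<open>\<Pi>\<^sub>E k\<in>I. Y k\<close> form a pair in \<open>S\<close>.\<close>

lemma product_of_finite_sets_compactness:
  fixes Y :: "'i \<Rightarrow> 'e set" and P :: "('i \<times> 'i \<times> ('e \<times> 'e) set) set"
  assumes fin: "\<And>k. k \<in> I \<Longrightarrow> finite (Y k)"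
    and P: "\<And>k l S. (k, l, S) \<in> P \<Longrightarrow> k \<in> I \<and> l \<in> I"
    and sat: "\<And>P'. finite P' \<Longrightarrow> P' \<subseteq> P \<Longrightarrow> \<exists>x\<in>PiE I Y. \<forall>(k, l, S)\<in>P'. (x k, x l) \<in> S"
  shows "\<exists>x\<in>PiE I Y. \<forall>(k, l, S)\<in>P. (x k, x l) \<in> S"
proof -
  define Tp where "Tp = product_topology (\<lambda>k. discrete_topology (Y k)) I"
  define sol where "sol = (\<lambda>(k, l, S). {x \<in> topspace Tp. (x k, x l) \<in> S})"
  have top: "topspace Tp = PiE I Y" by (simp add: Tp_def)
  have compact: "compact_space Tp"
    unfolding Tp_def compact_space_product_topology compact_space_discrete_topology
    by (simp add: fin)
  have closed: "closedin Tp (sol c)" if "c \<in> P" for c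
  proof -
    obtain k l S where c: "c = (k, l, S)" by (cases c)
    then have kl: "k \<in> I" "l \<in> I" using P \<open>c \<in> P\<close> by simp_all
    have "continuous_map Tp (discrete_topology (Y k \<times> Y l)) (\<lambda>x. (x k, x l))"
      unfolding prod_topology_discrete_topology Tp_def
      by (intro continuous_map_pairedI continuous_map_product_projection kl)
    then have "closedin Tp {x \<in> topspace Tp. (x k, x l) \<in> S \<inter> (Y k \<times> Y l)}"
      by (rule closedin_continuous_map_preimage) simp
    moreover have "{x \<in> topspace Tp. (x k, x l) \<in> S \<inter> (Y k \<times> Y l)} = sol c"
      using kl by (auto simp: c sol_def top)
    ultimately show ?thesis by simp
  qed
  have fip: "\<Inter>\<F> \<noteq> {}" if "finite \<F>" "\<F> \<subseteq> insert (topspace Tp) (sol ` P)" for \<F>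
  proof -
    have "\<F> - {topspace Tp} \<subseteq> sol ` P" "finite (\<F> - {topspace Tp})" using that by auto
    then obtain P' where P': "P' \<subseteq> P" "finite P'" "\<F> - {topspace Tp} = sol ` P'"
      by (meson finite_subset_image)
    then obtain x where x: "x \<in> PiE I Y" "\<forall>(k, l, S)\<in>P'. (x k, x l) \<in> S" using sat[OF P'(2,1)]
      by blast
    have "x \<in> A" if "A \<in> \<F>" for A
    proof (cases "A = topspace Tp")
      case True
      then show ?thesis using x(1) top by simp
    next
      case False
      then obtain c where "c \<in> P'" "A = sol c" using P' \<open>A \<in> \<F>\<close> by blast
      then show ?thesis using x by (auto simp: sol_def top)
    qed
    then have "x \<in> \<Inter>\<F>" by (rule InterI)
    then show ?thesis by auto
  qed
  have "\<Inter>(insert (topspace Tp) (sol ` P)) \<noteq> {}"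
    using compact unfolding compact_space_fip
    by (rule allE[of _ "insert (topspace Tp) (sol ` P)"]) (use closed fip in auto)
  then obtain x where "x \<in> topspace Tp" "\<And>c. c \<in> P \<Longrightarrow> x \<in> sol c" by blast
  then show ?thesis unfolding top by (intro bexI[of _ x]) (auto simp: sol_def)
qed

lemma directed_finite_lower_bound:
  assumes dir: "\<forall>U1\<in>T. \<forall>U2\<in>T. \<exists>U\<in>T. U \<subseteq> U1 \<inter> U2"
    and "finite J" "J \<subseteq> T" "U0 \<in> T"
  shows "\<exists>W\<in>T. W \<subseteq> U0 \<and> (\<forall>U\<in>J. W \<subseteq> U)"
  using assms(2,3)
proof (induction J rule: finite_induct)
  case empty
  then show ?case using assms(4) by blast
next
  case (insert U J)
  then obtain W where W: "W \<in> T" "W \<subseteq> U0" "\<forall>U\<in>J. W \<subseteq> U" by auto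
  obtain W' where "W' \<in> T" "W' \<subseteq> W \<inter> U" using dir W(1) insert.prems by blast
  then show ?case using W by (intro bexI[of _ W']) auto
qed

lemma inv_lim_zero_imp_transition_eventually_trivial:
  fixes H :: "'i set \<Rightarrow> ('e, 'b) monoid_scheme" and \<pi> :: "'i set \<Rightarrow> 'i set \<Rightarrow> 'e \<Rightarrow> 'e"
  assumes dir: "\<forall>U1\<in>T. \<forall>U2\<in>T. \<exists>U\<in>T. U \<subseteq> U1 \<inter> U2"
    and fin: "\<And>U. U \<in> T \<Longrightarrow> finite (carrier (H U))"
    and one: "\<And>U. U \<in> T \<Longrightarrow> \<one>\<^bsub>H U\<^esub> \<in> carrier (H U)"
    and closed: "\<And>U1 U2 y. \<lbrakk>U1 \<in> T; U2 \<in> T; U1 \<subseteq> U2; y \<in> carrier (H U1)\<rbrakk>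
                   \<Longrightarrow> \<pi> U1 U2 y \<in> carrier (H U2)"
    and comp: "\<And>U1 U2 U3 y. \<lbrakk>U1 \<in> T; U2 \<in> T; U3 \<in> T; U1 \<subseteq> U2; U2 \<subseteq> U3; y \<in> carrier (H U1)\<rbrakk>
                 \<Longrightarrow> \<pi> U2 U3 (\<pi> U1 U2 y) = \<pi> U1 U3 y"
    and lim: "inv_lim_zero T H \<pi>"
    and U0: "U0 \<in> T"
  shows "\<exists>V\<in>T. V \<subseteq> U0 \<and> (\<forall>y\<in>carrier (H V). \<pi> V U0 y = \<one>\<^bsub>H U0\<^esub>)"
proof (rule ccontr)
  \<comment> \<open>Otherwise compatibility together with \<open>x U0 \<noteq> \<one>\<close> is finitely satisfiable, witnessed by
    pushing forward a bad element from a common lower bound.\<close>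
  assume "\<not> ?thesis"
  then have bad: "\<And>V. V \<in> T \<Longrightarrow> V \<subseteq> U0 \<Longrightarrow> \<exists>y\<in>carrier (H V). \<pi> V U0 y \<noteq> \<one>\<^bsub>H U0\<^esub>"
    by blast
  define P where "P = insert (U0, U0, {(a, b). a \<noteq> \<one>\<^bsub>H U0\<^esub>})
    {(U1, U2, {(a, b). \<pi> U1 U2 a = b}) | U1 U2. U1 \<in> T \<and> U2 \<in> T \<and> U1 \<subseteq> U2}"
  have "\<exists>x\<in>PiE T (\<lambda>U. carrier (H U)). \<forall>(k, l, S)\<in>P. (x k, x l) \<in> S"
  proof (rule product_of_finite_sets_compactness[OF fin])
    show "k \<in> T \<and> l \<in> T" if "(k, l, S) \<in> P" for k l S
      using that U0 by (auto simp: P_def)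
  next
    fix P' assume P': "finite P'" "P' \<subseteq> P"
    let ?J = "fst ` P' \<union> (fst \<circ> snd) ` P'"
    have J: "finite ?J" "?J \<subseteq> T" using P' U0 by (auto simp: P_def)
    obtain W where W: "W \<in> T" "W \<subseteq> U0" "\<forall>U\<in>?J. W \<subseteq> U"
      using directed_finite_lower_bound[OF dir J U0] by blast
    obtain y where y: "y \<in> carrier (H W)" "\<pi> W U0 y \<noteq> \<one>\<^bsub>H U0\<^esub>" using bad W(1,2) by blast
    define x where "x = restrict (\<lambda>U. if W \<subseteq> U then \<pi> W U y else \<one>\<^bsub>H U\<^esub>) T"
    have "x \<in> PiE T (\<lambda>U. carrier (H U))" using closed W(1) y(1) one by (simp add: x_def)
    moreover have "(x k, x l) \<in> S" if "(k, l, S) \<in> P'" for k l S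
    proof -
      have "W \<subseteq> k" "W \<subseteq> l"
        using W(3) that by (metis UnCI comp_apply fst_conv image_eqI snd_conv)+
      moreover have "k \<in> T" "l \<in> T" using that P'(2) U0 by (auto simp: P_def)
      ultimately show ?thesis using that P'(2) W(1) y comp by (auto simp: P_def x_def)
    qed
    ultimately show "\<exists>x\<in>PiE T (\<lambda>U. carrier (H U)). \<forall>(k, l, S)\<in>P'. (x k, x l) \<in> S" by blast
  qed
  then obtain x where x: "x \<in> PiE T (\<lambda>U. carrier (H U))" "\<forall>(k, l, S)\<in>P. (x k, x l) \<in> S" by blast
  have "\<forall>U1\<in>T. \<forall>U2\<in>T. U1 \<subseteq> U2 \<longrightarrow> \<pi> U1 U2 (x U1) = x U2"
    using x(2) by (auto simp: P_def)
  then have "x U0 = \<one>\<^bsub>H U0\<^esub>"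
    using lim[unfolded inv_lim_zero_def, rule_format, of x U0] x(1) U0 by (simp add: PiE_iff)
  then show False using x(2) by (simp add: P_def)
qed


section \<open>Bar chains\<close>

lemma bar_chains_simps:
  "carrier (bar_chains G M n) = {f. (\<forall>x. f x \<in> carrier M) \<and> supp M f \<subseteq> bar_lists G n
      \<and> finite (supp M f)}"
  "monoid.mult (bar_chains G M n) = (\<lambda>f g x. f x \<otimes>\<^bsub>M\<^esub> g x)"
  "one (bar_chains G M n) = (\<lambda>x. \<one>\<^bsub>M\<^esub>)"
  by (simp_all add: bar_chains_def)

lemma in_bar_chains_iff:
  "f \<in> carrier (bar_chains G M n) \<longleftrightarrow> (\<forall>x. f x \<in> carrier M) \<and> supp M f \<subseteq> bar_lists G n
      \<and> finite (supp M f)"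
  by (simp add: bar_chains_simps)

lemma supp_mult_subset: "supp M (\<lambda>x. f x \<otimes>\<^bsub>M\<^esub> g x) \<subseteq> supp M f \<union> supp M g"
  if "monoid M" "\<forall>x. f x \<in> carrier M" "\<forall>x. g x \<in> carrier M"
  using that by (auto simp: supp_def monoid.l_one)

lemma comm_group_bar_chains:
  assumes M: "comm_group M"
  shows "comm_group (bar_chains G M n)"
proof -
  interpret M: comm_group M by (rule M)
  show ?thesis
  proof (rule comm_groupI)
    fix x y assume x: "x \<in> carrier (bar_chains G M n)" and y: "y \<in> carrier (bar_chains G M n)"
    have s: "supp M (\<lambda>z. x z \<otimes>\<^bsub>M\<^esub> y z) \<subseteq> supp M x \<union> supp M y"
      using x y by (intro supp_mult_subset) (auto simp: in_bar_chains_iff M.monoid_axioms)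
    show "x \<otimes>\<^bsub>bar_chains G M n\<^esub> y \<in> carrier (bar_chains G M n)"
      using x y s unfolding in_bar_chains_iff bar_chains_simps by (auto intro: finite_subset)
    show "x \<otimes>\<^bsub>bar_chains G M n\<^esub> y = y \<otimes>\<^bsub>bar_chains G M n\<^esub> x"
      using x y unfolding in_bar_chains_iff bar_chains_simps by (auto simp: M.m_comm)
  next
    show "\<one>\<^bsub>bar_chains G M n\<^esub> \<in> carrier (bar_chains G M n)"
      by (simp add: bar_chains_simps supp_def)
  next
    fix x y z assume "x \<in> carrier (bar_chains G M n)" "y \<in> carrier (bar_chains G M n)"
        "z \<in> carrier (bar_chains G M n)"
    then show "x \<otimes>\<^bsub>bar_chains G M n\<^esub> y \<otimes>\<^bsub>bar_chains G M n\<^esub> z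
        = x \<otimes>\<^bsub>bar_chains G M n\<^esub> (y \<otimes>\<^bsub>bar_chains G M n\<^esub> z)"
      unfolding in_bar_chains_iff bar_chains_simps by (auto simp: M.m_assoc)
  next
    fix x assume "x \<in> carrier (bar_chains G M n)"
    then show "\<one>\<^bsub>bar_chains G M n\<^esub> \<otimes>\<^bsub>bar_chains G M n\<^esub> x = x"
      unfolding in_bar_chains_iff bar_chains_simps by auto
  next
    fix x assume x: "x \<in> carrier (bar_chains G M n)"
    define y where "y = (\<lambda>z. inv\<^bsub>M\<^esub> x z)"
    have "supp M y = supp M x" using x unfolding y_def supp_def in_bar_chains_iff
      by (auto simp: M.inv_eq_one_eq)
    then have "y \<in> carrier (bar_chains G M n)" using x unfolding in_bar_chains_iff y_def by auto
    moreover have "y \<otimes>\<^bsub>bar_chains G M n\<^esub> x = \<one>\<^bsub>bar_chains G M n\<^esub>"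
      using x unfolding in_bar_chains_iff bar_chains_simps y_def by auto
    ultimately show "\<exists>y\<in>carrier (bar_chains G M n). y \<otimes>\<^bsub>bar_chains G M n\<^esub> x = \<one>\<^bsub>bar_chains G M n\<^esub>"
      by blast
  qed
qed

lemma supp_single_subset: "supp M (single M y m) \<subseteq> {y}"
  by (auto simp: supp_def single_def)

lemma single_in_bar_chains:
  assumes "monoid M" "y \<in> bar_lists G n" "m \<in> carrier M"
  shows "single M y m \<in> carrier (bar_chains G M n)"
proof -
  have "finite (supp M (single M y m))" by (rule finite_subset[OF supp_single_subset]) simp
  then show ?thesis using assms supp_single_subset[of M y m] unfolding in_bar_chains_iff
    by (auto simp: single_def monoid.one_closed)
qed

lemma single_one: "single M y \<one>\<^bsub>M\<^esub> = \<one>\<^bsub>bar_chains G M n\<^esub>"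
  by (auto simp: single_def bar_chains_simps)

lemma single_mult:
  assumes "monoid M" "a \<in> carrier M" "b \<in> carrier M"
  shows "single M y (a \<otimes>\<^bsub>M\<^esub> b) = single M y a \<otimes>\<^bsub>bar_chains G M n\<^esub> single M y b"
  using assms by (simp add: single_def bar_chains_simps monoid.l_one monoid.one_closed fun_eq_iff)

lemma bar_chains_finprod_apply:
  assumes M: "comm_group M" and g: "g \<in> S \<rightarrow> carrier (bar_chains G M n)"
  shows "finprod (bar_chains G M n) g S y = finprod M (\<lambda>s. g s y) S"
proof -
  interpret C: comm_group "bar_chains G M n" by (rule comm_group_bar_chains[OF M])
  interpret M: comm_group M by (rule M)
  show ?thesis
    using g
  proof (induction S rule: infinite_finite_induct)
    case (insert a A)
    then have "g a \<in> carrier (bar_chains G M n)" "g \<in> A \<rightarrow> carrier (bar_chains G M n)" by auto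
    moreover from this have "g a y \<in> carrier M" "(\<lambda>s. g s y) \<in> A \<rightarrow> carrier M"
      by (auto simp: Pi_iff in_bar_chains_iff)
    ultimately show ?case using insert by (simp add: bar_chains_simps)
  qed (simp_all add: bar_chains_simps)
qed

lemma comm_monoid_hom_finprod:
  assumes A: "comm_monoid A" and D: "comm_monoid D"
    and hm: "\<And>x y. x \<in> carrier A \<Longrightarrow> y \<in> carrier A \<Longrightarrow> h (x \<otimes>\<^bsub>A\<^esub> y) = h x \<otimes>\<^bsub>D\<^esub> h y"
    and h1: "h \<one>\<^bsub>A\<^esub> = \<one>\<^bsub>D\<^esub>"
    and hc: "\<And>x. x \<in> carrier A \<Longrightarrow> h x \<in> carrier D"
    and g: "g \<in> S \<rightarrow> carrier A"
  shows "h (finprod A g S) = finprod D (\<lambda>s. h (g s)) S"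
proof -
  interpret A: comm_monoid A by (rule A)
  interpret D: comm_monoid D by (rule D)
  show ?thesis
    using g
  proof (induction S rule: infinite_finite_induct)
    case (insert a S)
    then have "g a \<in> carrier A" "g \<in> S \<rightarrow> carrier A" by auto
    moreover from this have "(\<lambda>s. h (g s)) \<in> S \<rightarrow> carrier D" using hc by auto
    ultimately show ?case using insert hm hc by simp
  qed (simp_all add: h1)
qed

lemma finprod_sub_comm_monoid:
  assumes G: "comm_monoid G" and H: "comm_monoid H"
    and c: "carrier H \<subseteq> carrier G" and m: "monoid.mult H = monoid.mult G" and o: "one H = one G"
    and f: "f \<in> S \<rightarrow> carrier H"
  shows "finprod H f S = finprod G f S"
proof -
  interpret G: comm_monoid G by (rule G)
  interpret H: comm_monoid H by (rule H)
  show ?thesis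
    using f
  proof (induction S rule: infinite_finite_induct)
    case (insert a S)
    then have "f a \<in> carrier H" "f \<in> S \<rightarrow> carrier H" by auto
    moreover from this have "f \<in> S \<rightarrow> carrier G" "f a \<in> carrier G" using c by auto
    ultimately show ?case using insert m by simp
  qed (simp_all add: o)
qed

lemma finprod_singles_supp:
  assumes M: "comm_group M" and f: "f \<in> carrier (bar_chains G M n)"
  shows "finprod (bar_chains G M n) (\<lambda>x. single M x (f x)) (supp M f) = f"
proof
  fix y
  interpret M: comm_group M by (rule M)
  have g: "(\<lambda>x. single M x (f x)) \<in> supp M f \<rightarrow> carrier (bar_chains G M n)"
  proof
    fix x assume "x \<in> supp M f"
    then show "single M x (f x) \<in> carrier (bar_chains G M n)"
      using f by (intro single_in_bar_chains) (auto simp: in_bar_chains_iff M.monoid_axioms)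
  qed
  have fin: "finite (supp M f)" using f by (simp add: in_bar_chains_iff)
  have "finprod (bar_chains G M n) (\<lambda>x. single M x (f x)) (supp M f) y
        = finprod M (\<lambda>x. if y = x then f x else \<one>\<^bsub>M\<^esub>) (supp M f)"
    unfolding bar_chains_finprod_apply[OF M g] by (simp add: single_def)
  also have "\<dots> = f y"
  proof (cases "y \<in> supp M f")
    case True
    have "f \<in> supp M f \<rightarrow> carrier M" using f by (simp add: in_bar_chains_iff)
    then show ?thesis using M.finprod_singleton[OF True fin, of f] by simp
  next
    case False
    then have "f y = \<one>\<^bsub>M\<^esub>" by (simp add: supp_def)
    moreover have "finprod M (\<lambda>x. if y = x then f x else \<one>\<^bsub>M\<^esub>) (supp M f) = \<one>\<^bsub>M\<^esub>"
      using False by (intro M.finprod_one_eqI) auto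
    ultimately show ?thesis by simp
  qed
  finally show "finprod (bar_chains G M n) (\<lambda>x. single M x (f x)) (supp M f) y = f y" .
qed

text \<open>The bar boundary and the push-forward of chains are both the additive extension of their
  values \<open>T x m\<close> on the elementary chains \<open>m\<cdot>[x]\<close>.\<close>

definition lin_ext :: "('d,'c) monoid_scheme \<Rightarrow> ('m,'b) monoid_scheme
      \<Rightarrow> ('x \<Rightarrow> 'm \<Rightarrow> 'd) \<Rightarrow> ('x \<Rightarrow> 'm) \<Rightarrow> 'd" where
  "lin_ext D M T f = finprod D (\<lambda>x. T x (f x)) (supp M f)"

lemma lin_ext_cong:
  assumes D: "comm_monoid D" and f: "f \<in> carrier (bar_chains G M n)"
    and eq: "\<And>x m. x \<in> bar_lists G n \<Longrightarrow> m \<in> carrier M \<Longrightarrow> T x m = T' x m"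
    and T: "\<And>x m. x \<in> bar_lists G n \<Longrightarrow> m \<in> carrier M \<Longrightarrow> T x m \<in> carrier D"
  shows "lin_ext D M T f = lin_ext D M T' f"
  unfolding lin_ext_def using f eq T
  by (intro comm_monoid.finprod_cong'[OF D]) (auto simp: in_bar_chains_iff)

locale bar_linear =
  fixes G :: "('g,'a) monoid_scheme" and M :: "('m,'b) monoid_scheme" and n :: nat
    and D :: "('d,'c) monoid_scheme" and T :: "'g list \<Rightarrow> 'm \<Rightarrow> 'd"
  assumes M: "comm_group M" and D: "comm_monoid D"
    and Tc: "\<And>x m. x \<in> bar_lists G n \<Longrightarrow> m \<in> carrier M \<Longrightarrow> T x m \<in> carrier D"
    and T1: "\<And>x. x \<in> bar_lists G n \<Longrightarrow> T x \<one>\<^bsub>M\<^esub> = \<one>\<^bsub>D\<^esub>"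
    and Tm: "\<And>x a b. x \<in> bar_lists G n \<Longrightarrow> a \<in> carrier M \<Longrightarrow> b \<in> carrier M \<Longrightarrow>
               T x (a \<otimes>\<^bsub>M\<^esub> b) = T x a \<otimes>\<^bsub>D\<^esub> T x b"
begin

lemma lin_ext_superset:
  assumes f: "f \<in> carrier (bar_chains G M n)" and S: "finite S" "supp M f \<subseteq> S" "S \<subseteq> bar_lists G n"
  shows "lin_ext D M T f = finprod D (\<lambda>x. T x (f x)) S"
proof -
  interpret D: comm_monoid D by (rule D)
  have fx: "\<And>x. f x \<in> carrier M" using f by (simp add: in_bar_chains_iff)
  show ?thesis unfolding lin_ext_def
  proof (rule D.finprod_mono_neutral_cong_left[OF S(1,2)])
    fix i assume "i \<in> S - supp M f"
    then have "f i = \<one>\<^bsub>M\<^esub>" "i \<in> bar_lists G n" using S by (auto simp: supp_def)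
    then show "T i (f i) = \<one>\<^bsub>D\<^esub>" by (simp add: T1)
  next
    show "(\<lambda>x. T x (f x)) \<in> S \<rightarrow> carrier D" using S(3) fx Tc by auto
  qed simp
qed

lemma lin_ext_closed:
  assumes f: "f \<in> carrier (bar_chains G M n)"
  shows "lin_ext D M T f \<in> carrier D"
proof -
  interpret D: comm_monoid D by (rule D)
  have "(\<lambda>x. T x (f x)) \<in> supp M f \<rightarrow> carrier D" using f Tc by (auto simp: in_bar_chains_iff)
  then show ?thesis unfolding lin_ext_def by (rule D.finprod_closed)
qed

lemma lin_ext_mult:
  assumes f: "f \<in> carrier (bar_chains G M n)" and g: "g \<in> carrier (bar_chains G M n)"
  shows "lin_ext D M T (f \<otimes>\<^bsub>bar_chains G M n\<^esub> g) = lin_ext D M T f \<otimes>\<^bsub>D\<^esub> lin_ext D M T g"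
proof -
  interpret D: comm_monoid D by (rule D)
  interpret M: comm_group M by (rule M)
  interpret C: comm_group "bar_chains G M n" by (rule comm_group_bar_chains[OF M])
  let ?S = "supp M f \<union> supp M g"
  have fS: "finite ?S" "?S \<subseteq> bar_lists G n" using f g by (auto simp: in_bar_chains_iff)
  have fg: "f \<otimes>\<^bsub>bar_chains G M n\<^esub> g \<in> carrier (bar_chains G M n)" using f g by simp
  have sfg: "supp M (f \<otimes>\<^bsub>bar_chains G M n\<^esub> g) \<subseteq> ?S"
    unfolding bar_chains_simps using f g
    by (intro supp_mult_subset) (auto simp: in_bar_chains_iff M.monoid_axioms)
  have fx: "\<And>x. f x \<in> carrier M" "\<And>x. g x \<in> carrier M" using f g by (auto simp: in_bar_chains_iff)
  have "lin_ext D M T (f \<otimes>\<^bsub>bar_chains G M n\<^esub> g) = finprod D (\<lambda>x. T x ((f \<otimes>\<^bsub>bar_chains G M n\<^esub> g) x)) ?S"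
    by (rule lin_ext_superset[OF fg fS(1) sfg fS(2)])
  also have "\<dots> = finprod D (\<lambda>x. T x (f x) \<otimes>\<^bsub>D\<^esub> T x (g x)) ?S"
    by (intro D.finprod_cong') (use fS fx Tm Tc in \<open>auto simp: bar_chains_simps\<close>)
  also have "\<dots> = finprod D (\<lambda>x. T x (f x)) ?S \<otimes>\<^bsub>D\<^esub> finprod D (\<lambda>x. T x (g x)) ?S"
    by (rule D.finprod_multf) (use fS fx Tc in auto)
  also have "\<dots> = lin_ext D M T f \<otimes>\<^bsub>D\<^esub> lin_ext D M T g"
    using lin_ext_superset[OF f fS(1) _ fS(2)] lin_ext_superset[OF g fS(1) _ fS(2)] by simp
  finally show ?thesis .
qed

lemma lin_ext_one: "lin_ext D M T \<one>\<^bsub>bar_chains G M n\<^esub> = \<one>\<^bsub>D\<^esub>"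
proof -
  interpret D: comm_monoid D by (rule D)
  have "supp M \<one>\<^bsub>bar_chains G M n\<^esub> = {}" by (simp add: bar_chains_simps supp_def)
  then show ?thesis by (simp add: lin_ext_def)
qed

lemma lin_ext_single:
  assumes "y \<in> bar_lists G n" "m \<in> carrier M"
  shows "lin_ext D M T (single M y m) = T y m"
proof -
  interpret D: comm_monoid D by (rule D)
  interpret M: comm_group M by (rule M)
  have "lin_ext D M T (single M y m) = finprod D (\<lambda>x. T x (single M y m x)) {y}"
    by (rule lin_ext_superset)
    (use assms supp_single_subset[of M y m] in \<open>auto intro: single_in_bar_chains M.monoid_axioms\<close>)
  also have "\<dots> = T y m" using assms Tc by (simp add: single_def)
  finally show ?thesis .
qed

lemma lin_ext_finprod:
  assumes g: "g \<in> S \<rightarrow> carrier (bar_chains G M n)"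
  shows "lin_ext D M T (finprod (bar_chains G M n) g S) = finprod D (\<lambda>s. lin_ext D M T (g s)) S"
proof -
  interpret C: comm_group "bar_chains G M n" by (rule comm_group_bar_chains[OF M])
  show ?thesis
    by (rule comm_monoid_hom_finprod[where h="lin_ext D M T", OF C.comm_monoid_axioms D
        lin_ext_mult lin_ext_one lin_ext_closed g])
qed

lemma lin_ext_comp:
  assumes f: "f \<in> carrier (bar_chains G M k)"
    and S: "\<And>x m. x \<in> bar_lists G k \<Longrightarrow> m \<in> carrier M \<Longrightarrow> S x m \<in> carrier (bar_chains G M n)"
  shows "lin_ext D M T (lin_ext (bar_chains G M n) M S f)
      = lin_ext D M (\<lambda>x m. lin_ext D M T (S x m)) f"
proof -
  have "(\<lambda>x. S x (f x)) \<in> supp M f \<rightarrow> carrier (bar_chains G M n)"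
    using f S by (auto simp: in_bar_chains_iff)
  then have "lin_ext D M T (finprod (bar_chains G M n) (\<lambda>x. S x (f x)) (supp M f))
      = finprod D (\<lambda>x. lin_ext D M T (S x (f x))) (supp M f)"
    by (rule lin_ext_finprod)
  then show ?thesis by (simp only: lin_ext_def[of "bar_chains G M n"] lin_ext_def[of D M
      "\<lambda>x m. lin_ext D M T (S x m)"])
qed

end


lemma bar_face_in_bar_lists:
  assumes G: "monoid G"
    and x: "x \<in> bar_lists G (Suc n)" and i: "i \<le> Suc n"
  shows "bar_face G (Suc n) i x \<in> bar_lists G n"
proof -
  have lx: "length x = Suc n" and sx: "set x \<subseteq> carrier G" using x by (auto simp: bar_lists_def)
  consider "i = 0" | "i = Suc n" | "0 < i" "i \<le> n" using i by linarith
  then show ?thesis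
  proof cases
    case 1
    have "set (tl x) \<subseteq> set x" by (cases x) auto
    then show ?thesis using 1 lx sx by (auto simp: bar_face_def bar_lists_def)
  next
    case 2 then show ?thesis using lx sx
      by (auto simp: bar_face_def bar_lists_def dest: in_set_butlastD)
  next
    case 3
    have a: "x ! (i - 1) \<in> carrier G" "x ! i \<in> carrier G" using 3 lx sx
      by (auto intro!: subsetD[OF sx] nth_mem)
    have "set (take (i - 1) x) \<subseteq> carrier G" "set (drop (i + 1) x) \<subseteq> carrier G"
      using sx by (meson order_trans set_take_subset set_drop_subset)+
    then show ?thesis using 3 lx a monoid.m_closed[OF G a]
      by (auto simp: bar_face_def bar_lists_def)
  qed
qed

abbreviation trivial_action :: "'g \<Rightarrow> 'm \<Rightarrow> 'm" where
  "trivial_action \<equiv> \<lambda>g m. m"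

lemma bar_coef_trivial: "bar_coef G M trivial_action i x m = (if even i then m else inv\<^bsub>M\<^esub> m)"
  by (simp add: bar_coef_def)

definition bar_bd_gen :: "('g,'a) monoid_scheme \<Rightarrow> ('m,'b) monoid_scheme \<Rightarrow> ('g \<Rightarrow> 'm \<Rightarrow> 'm) \<Rightarrow> nat
      \<Rightarrow> 'g list \<Rightarrow> 'm \<Rightarrow> ('g list \<Rightarrow> 'm)" where
  "bar_bd_gen G M \<phi> n x m = finprod (bar_chains G M n)
      (\<lambda>i. single M (bar_face G (Suc n) i x) (bar_coef G M \<phi> i x m)) {0..Suc n}"

lemma bar_bd_lin_ext: "bar_bd G M \<phi> (Suc n) f = lin_ext (bar_chains G M n) M (bar_bd_gen G M \<phi> n) f"
  by (simp add: bar_bd_def lin_ext_def bar_bd_gen_def)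

lemma bar_linear_bar_bd_gen:
  assumes M: "comm_group M"
    and G: "monoid G"
  shows "bar_linear G M (Suc n) (bar_chains G M n) (bar_bd_gen G M trivial_action n)"
proof -
  interpret M: comm_group M by (rule M)
  interpret C: comm_group "bar_chains G M n" by (rule comm_group_bar_chains[OF M])
  have cc: "bar_coef G M trivial_action i x m \<in> carrier M" if "m \<in> carrier M" for i x m
    using that by (simp add: bar_coef_trivial)
  have sc: "(\<lambda>i. single M (bar_face G (Suc n) i x) (bar_coef G M trivial_action i x m))
      \<in> {0..Suc n} \<rightarrow> carrier (bar_chains G M n)"
    if "x \<in> bar_lists G (Suc n)" "m \<in> carrier M" for x m
    using that by (auto intro!: single_in_bar_chains bar_face_in_bar_lists[OF G] cc M.monoid_axioms)
  show ?thesis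
  proof (rule bar_linear.intro)
    show "comm_group M" by (rule M)
    show "comm_monoid (bar_chains G M n)" by (rule C.comm_monoid_axioms)
  next
    fix x m assume "x \<in> bar_lists G (Suc n)" "m \<in> carrier M"
    then show "bar_bd_gen G M trivial_action n x m \<in> carrier (bar_chains G M n)"
      unfolding bar_bd_gen_def by (rule C.finprod_closed[OF sc])
  next
    fix x assume "x \<in> bar_lists G (Suc n)"
    have "bar_bd_gen G M trivial_action n x \<one>\<^bsub>M\<^esub>
        = finprod (bar_chains G M n) (\<lambda>i. \<one>\<^bsub>bar_chains G M n\<^esub>) {0..Suc n}"
      unfolding bar_bd_gen_def bar_coef_trivial by (intro C.finprod_cong') (auto simp: single_one)
    then show "bar_bd_gen G M trivial_action n x \<one>\<^bsub>M\<^esub> = \<one>\<^bsub>bar_chains G M n\<^esub>" by simp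
  next
    fix x a b assume x: "x \<in> bar_lists G (Suc n)" and a: "a \<in> carrier M" and b: "b \<in> carrier M"
    have "bar_bd_gen G M trivial_action n x (a \<otimes>\<^bsub>M\<^esub> b) = finprod (bar_chains G M n)
        (\<lambda>i. single M (bar_face G (Suc n) i x) (bar_coef G M trivial_action i x a) \<otimes>\<^bsub>bar_chains G M n\<^esub>
             single M (bar_face G (Suc n) i x) (bar_coef G M trivial_action i x b)) {0..Suc n}"
      unfolding bar_bd_gen_def
    proof (intro C.finprod_cong')
      fix i
      show "single M (bar_face G (Suc n) i x) (bar_coef G M trivial_action i x (a \<otimes>\<^bsub>M\<^esub> b)) =
         single M (bar_face G (Suc n) i x) (bar_coef G M trivial_action i x a) \<otimes>\<^bsub>bar_chains G M n\<^esub>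
         single M (bar_face G (Suc n) i x) (bar_coef G M trivial_action i x b)"
        using a b by (simp add: bar_coef_trivial single_mult[OF M.monoid_axioms] M.inv_mult)
    qed (use sc[OF x a] sc[OF x b] in auto)
    also have "\<dots> = bar_bd_gen G M trivial_action n x a
        \<otimes>\<^bsub>bar_chains G M n\<^esub> bar_bd_gen G M trivial_action n x b"
      unfolding bar_bd_gen_def by (rule C.finprod_multf[OF sc[OF x a] sc[OF x b]])
    finally show "bar_bd_gen G M trivial_action n x (a \<otimes>\<^bsub>M\<^esub> b)
        = bar_bd_gen G M trivial_action n x a
          \<otimes>\<^bsub>bar_chains G M n\<^esub> bar_bd_gen G M trivial_action n x b" .
  qed
qed



abbreviation homology_class :: "('g,'a) monoid_scheme \<Rightarrow> ('m,'b) monoid_scheme \<Rightarrow> ('g \<Rightarrow> 'm \<Rightarrow> 'm)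
      \<Rightarrow> nat \<Rightarrow> ('g list \<Rightarrow> 'm) \<Rightarrow> ('g list \<Rightarrow> 'm) set" where
  "homology_class G M \<phi> n c \<equiv> bar_boundaries G M \<phi> n #>\<^bsub>bar_chains G M n\<^esub> c"

lemma set_mult_upd: "set_mult (K\<lparr>carrier := S\<rparr>) = set_mult K"
  by (intro ext) simp

lemma carrier_FactGroup_upd:
  "carrier ((K\<lparr>carrier := Z\<rparr>) Mod Bd) = (\<lambda>c. Bd #>\<^bsub>K\<^esub> c) ` Z"
  by (auto simp: FactGroup_def RCOSETS_def)

lemma carrier_group_homology:
  "carrier (group_homology G M \<phi> n) = homology_class G M \<phi> n ` bar_cycles G M \<phi> n"
  unfolding group_homology_def by (rule carrier_FactGroup_upd)

lemma (in comm_group) rcosets_of_set_mult: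
  assumes Z: "subgroup Z G" and Bd: "subgroup Bd G"
  shows "(\<lambda>c. Bd #> c) ` (Z <#> Bd) = (\<lambda>c. Bd #> c) ` Z"
proof
  show "(\<lambda>c. Bd #> c) ` (Z <#> Bd) \<subseteq> (\<lambda>c. Bd #> c) ` Z"
  proof
    fix Y assume "Y \<in> (\<lambda>c. Bd #> c) ` (Z <#> Bd)"
    then obtain z b where zb: "z \<in> Z" "b \<in> Bd" "Y = Bd #> (z \<otimes> b)"
      unfolding set_mult_def by blast
    have zc: "z \<in> carrier G" "b \<in> carrier G" using zb subgroup.subset[OF Z] subgroup.subset[OF Bd]
      by auto
    have "Bd #> (z \<otimes> b) = (Bd #> b) #> z"
      using zc subgroup.subset[OF Bd] by (simp add: m_comm coset_mult_assoc)
    also have "\<dots> = Bd #> z" using subgroup.rcos_const[OF Bd is_group zb(2)] by simp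
    finally show "Y \<in> (\<lambda>c. Bd #> c) ` Z" using zb by blast
  qed
  have "Z \<subseteq> Z <#> Bd"
    using subgroup.subset[OF Z] subgroup.one_closed[OF Bd] unfolding set_mult_def by force
  then show "(\<lambda>c. Bd #> c) ` Z \<subseteq> (\<lambda>c. Bd #> c) ` (Z <#> Bd)" by blast
qed

text \<open>Boundaries are never shown to be cycles, so the quotient \<open>Z / Bd\<close> defining homology is
  identified with the factor group of the subgroup \<open>Z <#> Bd\<close> by \<open>Bd\<close>.\<close>

lemma comm_group_FactGroup_upd:
  assumes K: "comm_group K" and Z: "subgroup Z K" and Bd: "subgroup Bd K"
  shows "comm_group ((K\<lparr>carrier := Z\<rparr>) Mod Bd)"
proof -
  interpret K: comm_group K by (rule K)
  let ?ZB = "Z <#>\<^bsub>K\<^esub> Bd"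
  have ZB: "subgroup ?ZB K" by (rule K.mult_subgroups[OF Z Bd])
  have "comm_group (K\<lparr>carrier := ?ZB\<rparr>)"
  proof (rule group.group_comm_groupI[OF K.subgroup_imp_group[OF ZB]])
    fix x y assume "x \<in> carrier (K\<lparr>carrier := ?ZB\<rparr>)" "y \<in> carrier (K\<lparr>carrier := ?ZB\<rparr>)"
    then show "x \<otimes>\<^bsub>K\<lparr>carrier := ?ZB\<rparr>\<^esub> y = y \<otimes>\<^bsub>K\<lparr>carrier := ?ZB\<rparr>\<^esub> x"
      using subgroup.subset[OF ZB] by (simp add: K.m_comm subset_iff)
  qed
  moreover have "Bd \<subseteq> ?ZB"
    using subgroup.subset[OF Bd] subgroup.one_closed[OF Z] unfolding set_mult_def by force
  then have "subgroup Bd (K\<lparr>carrier := ?ZB\<rparr>)" by (rule K.subgroup_incl[OF Bd ZB])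
  ultimately have "comm_group ((K\<lparr>carrier := ?ZB\<rparr>) Mod Bd)" by (rule comm_group.abelian_FactGroup)
  moreover have "(K\<lparr>carrier := ?ZB\<rparr>) Mod Bd = (K\<lparr>carrier := Z\<rparr>) Mod Bd"
    using K.rcosets_of_set_mult[OF Z Bd] carrier_FactGroup_upd[where K=K and Z="?ZB"]
        carrier_FactGroup_upd[where K=K and Z=Z]
    by (simp add: FactGroup_def set_mult_upd)
  ultimately show ?thesis by simp
qed


context
  fixes G :: "('g,'a) monoid_scheme" and M :: "('m,'b) monoid_scheme"
  assumes M: "comm_group M"
    and G: "monoid G"
begin

lemma trivial_bar_bd_closed:
  "f \<in> carrier (bar_chains G M (Suc n))
      \<Longrightarrow> bar_bd G M trivial_action (Suc n) f \<in> carrier (bar_chains G M n)"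
  unfolding bar_bd_lin_ext by (rule bar_linear.lin_ext_closed[OF bar_linear_bar_bd_gen[OF M G]])

lemma trivial_bar_bd_mult:
  "f \<in> carrier (bar_chains G M (Suc n)) \<Longrightarrow> g \<in> carrier (bar_chains G M (Suc n)) \<Longrightarrow>
   bar_bd G M trivial_action (Suc n) (f \<otimes>\<^bsub>bar_chains G M (Suc n)\<^esub> g) =
   bar_bd G M trivial_action (Suc n) f \<otimes>\<^bsub>bar_chains G M n\<^esub> bar_bd G M trivial_action (Suc n) g"
  unfolding bar_bd_lin_ext by (rule bar_linear.lin_ext_mult[OF bar_linear_bar_bd_gen[OF M G]])

lemma trivial_bar_bd_group_hom:
  "group_hom (bar_chains G M (Suc n)) (bar_chains G M n) (bar_bd G M trivial_action (Suc n))"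
proof -
  interpret C1: comm_group "bar_chains G M (Suc n)" by (rule comm_group_bar_chains[OF M])
  interpret C0: comm_group "bar_chains G M n" by (rule comm_group_bar_chains[OF M])
  show ?thesis
    by (intro group_hom.intro group_hom_axioms.intro C1.is_group C0.is_group homI
        trivial_bar_bd_closed trivial_bar_bd_mult)
qed

lemma trivial_cycles_subgroup: "subgroup (bar_cycles G M trivial_action n) (bar_chains G M n)"
proof (cases n)
  case 0
  interpret C: comm_group "bar_chains G M n" by (rule comm_group_bar_chains[OF M])
  show ?thesis using 0 C.subgroup_self by (simp add: bar_cycles_def)
next
  case (Suc k)
  have "bar_cycles G M trivial_action n
      = kernel (bar_chains G M (Suc k)) (bar_chains G M k) (bar_bd G M trivial_action (Suc k))"
    using Suc by (simp add: bar_cycles_def kernel_def)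
  then show ?thesis using group_hom.subgroup_kernel[OF trivial_bar_bd_group_hom[of k]] Suc by simp
qed

lemma trivial_boundaries_subgroup:
    "subgroup (bar_boundaries G M trivial_action n) (bar_chains G M n)"
  unfolding bar_boundaries_def by (rule group_hom.img_is_subgroup[OF trivial_bar_bd_group_hom])

lemma trivial_homology_comm_group: "comm_group (group_homology G M trivial_action n)"
  unfolding group_homology_def
  by (rule comm_group_FactGroup_upd[OF comm_group_bar_chains[OF M] trivial_cycles_subgroup
      trivial_boundaries_subgroup])

end


section \<open>Maps induced on homology\<close>

lemma (in group) some_in_rcoset:
  assumes "subgroup H G" "a \<in> carrier G"
  obtains h where "h \<in> H" "(SOME k. k \<in> H #> a) = h \<otimes> a"
proof -
  have "a \<in> H #> a" by (rule rcos_self[OF assms(2,1)])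
  then have "(SOME k. k \<in> H #> a) \<in> H #> a" by (rule someI)
  then show ?thesis using that unfolding r_coset_def by blast
qed

lemma homology_map_rcoset:
  assumes C: "group (bar_chains G M n)" and C': "group (bar_chains G' M' n)"
    and Bd: "subgroup (bar_boundaries G M \<phi> n) (bar_chains G M n)"
    and Bd': "subgroup (bar_boundaries G' M' \<phi>' n) (bar_chains G' M' n)"
    and F: "F \<in> hom (bar_chains G M n) (bar_chains G' M' n)"
    and F_Bd: "F ` bar_boundaries G M \<phi> n \<subseteq> bar_boundaries G' M' \<phi>' n"
    and c: "c \<in> carrier (bar_chains G M n)"
  shows "homology_map G' M' \<phi>' n F (homology_class G M \<phi> n c)
       = homology_class G' M' \<phi>' n (F c)"
proof -
  interpret C: group "bar_chains G M n" by (rule C)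
  interpret C': group "bar_chains G' M' n" by (rule C')
  let ?B = "bar_boundaries G M \<phi> n" and ?B' = "bar_boundaries G' M' \<phi>' n"
  obtain b where b: "b \<in> ?B" "(SOME k. k \<in> ?B #>\<^bsub>bar_chains G M n\<^esub> c) = b \<otimes>\<^bsub>bar_chains G M n\<^esub> c"
    using C.some_in_rcoset[OF Bd c] .
  have bc: "b \<in> carrier (bar_chains G M n)" using b(1) subgroup.subset[OF Bd] by blast
  have "homology_map G' M' \<phi>' n F (?B #>\<^bsub>bar_chains G M n\<^esub> c)
      = ?B' #>\<^bsub>bar_chains G' M' n\<^esub> (F b \<otimes>\<^bsub>bar_chains G' M' n\<^esub> F c)"
    unfolding homology_map_def b(2) using F bc c by (simp add: hom_mult)
  also have "\<dots> = (?B' #>\<^bsub>bar_chains G' M' n\<^esub> F b) #>\<^bsub>bar_chains G' M' n\<^esub> F c"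
    using subgroup.subset[OF Bd'] F bc c by (simp add: C'.coset_mult_assoc hom_in_carrier)
  also have "\<dots> = ?B' #>\<^bsub>bar_chains G' M' n\<^esub> F c"
    using subgroup.rcos_const[OF Bd' C'.is_group] F_Bd b(1) by (simp add: image_subset_iff)
  finally show ?thesis .
qed


lemma bar_face_cong: "monoid.mult G1 = monoid.mult G2 \<Longrightarrow> bar_face G1 = bar_face G2"
  by (intro ext) (simp add: bar_face_def)

context
  fixes G1 G2 :: "('g,'a) monoid_scheme" and M :: "('m,'b) monoid_scheme"
  assumes M: "comm_group M"
    and G1: "monoid G1"
    and G2: "monoid G2"
    and sub: "carrier G1 \<subseteq> carrier G2"
    and mm: "monoid.mult G1 = monoid.mult G2"
begin

lemma bar_lists_mono: "bar_lists G1 n \<subseteq> bar_lists G2 n"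
  using sub by (auto simp: bar_lists_def)

lemma bar_chains_mono: "carrier (bar_chains G1 M n) \<subseteq> carrier (bar_chains G2 M n)"
  using bar_lists_mono[of n] unfolding bar_chains_simps by blast

lemma finprod_bar_chains_mono:
  assumes "f \<in> S \<rightarrow> carrier (bar_chains G1 M n)"
  shows "finprod (bar_chains G1 M n) f S = finprod (bar_chains G2 M n) f S"
proof -
  interpret C1: comm_group "bar_chains G1 M n" by (rule comm_group_bar_chains[OF M])
  interpret C2: comm_group "bar_chains G2 M n" by (rule comm_group_bar_chains[OF M])
  show ?thesis
    by (rule finprod_sub_comm_monoid[OF C2.comm_monoid_axioms C1.comm_monoid_axioms
        bar_chains_mono _ _ assms])
       (simp_all add: bar_chains_simps)
qed

lemma bar_bd_gen_mono_eq:
  assumes x: "x \<in> bar_lists G1 (Suc n)" and m: "m \<in> carrier M"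
  shows "bar_bd_gen G1 M trivial_action n x m = bar_bd_gen G2 M trivial_action n x m"
proof -
  interpret M: comm_group M by (rule M)
  let ?h = "\<lambda>i. single M (bar_face G1 (Suc n) i x) (bar_coef G1 M trivial_action i x m)"
  have h: "?h \<in> {0..Suc n} \<rightarrow> carrier (bar_chains G1 M n)"
    using x m by (auto intro!: single_in_bar_chains bar_face_in_bar_lists[OF G1] M.monoid_axioms
        simp: bar_coef_trivial)
  have "bar_bd_gen G1 M trivial_action n x m = finprod (bar_chains G1 M n) ?h {0..Suc n}"
    by (simp add: bar_bd_gen_def)
  also have "\<dots> = finprod (bar_chains G2 M n) ?h {0..Suc n}" by (rule finprod_bar_chains_mono[OF h])
  also have "\<dots> = bar_bd_gen G2 M trivial_action n x m"
    by (simp add: bar_bd_gen_def bar_face_cong[OF mm] bar_coef_trivial)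
  finally show ?thesis .
qed

lemma trivial_bar_bd_mono_eq:
  assumes f: "f \<in> carrier (bar_chains G1 M (Suc n))"
  shows "bar_bd G1 M trivial_action (Suc n) f = bar_bd G2 M trivial_action (Suc n) f"
proof -
  interpret C2: comm_group "bar_chains G2 M n" by (rule comm_group_bar_chains[OF M])
  have fx: "\<And>x. f x \<in> carrier M" "supp M f \<subseteq> bar_lists G1 (Suc n)" using f
    by (auto simp: in_bar_chains_iff)
  have "(\<lambda>x. bar_bd_gen G1 M trivial_action n x (f x)) \<in> supp M f \<rightarrow> carrier (bar_chains G1 M n)"
    using fx bar_linear.Tc[OF bar_linear_bar_bd_gen[OF M G1]] by blast
  then have "bar_bd G1 M trivial_action (Suc n) f
      = finprod (bar_chains G2 M n) (\<lambda>x. bar_bd_gen G1 M trivial_action n x (f x)) (supp M f)"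
    unfolding bar_bd_lin_ext lin_ext_def by (rule finprod_bar_chains_mono)
  also have "\<dots> = finprod (bar_chains G2 M n) (\<lambda>x. bar_bd_gen G2 M trivial_action n x (f x))
      (supp M f)"
  proof (rule C2.finprod_cong')
    show "(\<lambda>x. bar_bd_gen G2 M trivial_action n x (f x)) \<in> supp M f \<rightarrow> carrier (bar_chains G2 M n)"
      using fx bar_lists_mono bar_linear.Tc[OF bar_linear_bar_bd_gen[OF M G2]] by blast
  qed (use fx bar_bd_gen_mono_eq in auto)
  also have "\<dots> = bar_bd G2 M trivial_action (Suc n) f" unfolding bar_bd_lin_ext lin_ext_def ..
  finally show ?thesis .
qed

lemma trivial_cycles_mono: "bar_cycles G1 M trivial_action n \<subseteq> bar_cycles G2 M trivial_action n"
proof (cases n)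
  case 0 then show ?thesis using bar_chains_mono by (simp add: bar_cycles_def)
next
  case (Suc k)
  show ?thesis
  proof
    fix f assume "f \<in> bar_cycles G1 M trivial_action n"
    then have f: "f \<in> carrier (bar_chains G1 M (Suc k))"
        "bar_bd G1 M trivial_action (Suc k) f = \<one>\<^bsub>bar_chains G1 M k\<^esub>"
      using Suc by (auto simp: bar_cycles_def)
    then show "f \<in> bar_cycles G2 M trivial_action n"
      using Suc bar_chains_mono trivial_bar_bd_mono_eq[OF f(1)]
      by (auto simp: bar_cycles_def bar_chains_simps)
  qed
qed

lemma trivial_boundaries_mono:
    "bar_boundaries G1 M trivial_action n \<subseteq> bar_boundaries G2 M trivial_action n"
  unfolding bar_boundaries_def using trivial_bar_bd_mono_eq bar_chains_mono by fastforce

lemma bar_push_id: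
  assumes k: "k \<in> carrier (bar_chains G1 M n)"
  shows "bar_push G1 M G2 M n id id k = k"
proof -
  interpret M: comm_group M by (rule M)
  have "(\<lambda>x. single M x (k x)) \<in> supp M k \<rightarrow> carrier (bar_chains G1 M n)"
  proof
    fix x assume "x \<in> supp M k"
    then show "single M x (k x) \<in> carrier (bar_chains G1 M n)"
      using k by (intro single_in_bar_chains) (auto simp: in_bar_chains_iff M.monoid_axioms)
  qed
  then have "finprod (bar_chains G2 M n) (\<lambda>x. single M x (k x)) (supp M k)
      = finprod (bar_chains G1 M n) (\<lambda>x. single M x (k x)) (supp M k)"
    by (rule finprod_bar_chains_mono[symmetric])
  also have "\<dots> = k" by (rule finprod_singles_supp[OF M k])
  finally show ?thesis by (simp add: bar_push_def)
qed

lemma homology_map_inclusion: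
  assumes c: "c \<in> bar_cycles G1 M trivial_action n"
  shows "homology_map G2 M trivial_action n (bar_push G1 M G2 M n id id)
           (homology_class G1 M trivial_action n c)
         = homology_class G2 M trivial_action n c"
proof -
  interpret C1: comm_group "bar_chains G1 M n" by (rule comm_group_bar_chains[OF M])
  interpret C2: comm_group "bar_chains G2 M n" by (rule comm_group_bar_chains[OF M])
  have B1: "bar_boundaries G1 M trivial_action n \<subseteq> carrier (bar_chains G1 M n)"
    using subgroup.subset[OF trivial_boundaries_subgroup[OF M G1]] .
  have cc: "c \<in> carrier (bar_chains G1 M n)"
    using subgroup.subset[OF trivial_cycles_subgroup[OF M G1]] c by blast
  have "bar_push G1 M G2 M n id id \<in> hom (bar_chains G1 M n) (bar_chains G2 M n)"
  proof (rule homI)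
    fix f g assume f: "f \<in> carrier (bar_chains G1 M n)" and g: "g \<in> carrier (bar_chains G1 M n)"
    show "bar_push G1 M G2 M n id id (f \<otimes>\<^bsub>bar_chains G1 M n\<^esub> g)
        = bar_push G1 M G2 M n id id f \<otimes>\<^bsub>bar_chains G2 M n\<^esub> bar_push G1 M G2 M n id id g"
      by (simp only: bar_push_id[OF C1.m_closed[OF f g]] bar_push_id[OF f] bar_push_id[OF g])
        (simp add: bar_chains_simps)
  qed (auto simp: bar_push_id intro: subsetD[OF bar_chains_mono])
  moreover have "bar_push G1 M G2 M n id id ` bar_boundaries G1 M trivial_action n
      \<subseteq> bar_boundaries G2 M trivial_action n"
    using B1 trivial_boundaries_mono by (auto simp: bar_push_id subset_iff)
  ultimately show ?thesis
    using homology_map_rcoset[OF C1.is_group C2.is_group trivial_boundaries_subgroup[OF M G1]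
        trivial_boundaries_subgroup[OF M G2] _ _ cc]
    by (simp add: bar_push_id[OF cc])
qed

end


lemma bar_push_lin_ext: "bar_push G M G' M' n \<alpha> \<beta> f
    = lin_ext (bar_chains G' M' n) M (\<lambda>x m. single M' (map \<alpha> x) (\<beta> m)) f"
  by (simp add: bar_push_def lin_ext_def)

context
  fixes G :: "('g,'a) monoid_scheme" and M :: "('m,'b) monoid_scheme" and \<alpha> :: "'g \<Rightarrow> 'g"
  assumes M: "comm_group M"
    and G: "monoid G"
    and ac: "\<And>a. a \<in> carrier G \<Longrightarrow> \<alpha> a \<in> carrier G"
    and am: "\<And>a b. a \<in> carrier G \<Longrightarrow> b \<in> carrier G \<Longrightarrow> \<alpha> (a \<otimes>\<^bsub>G\<^esub> b) = \<alpha> a \<otimes>\<^bsub>G\<^esub> \<alpha> b"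
begin

lemma map_in_bar_lists: "x \<in> bar_lists G n \<Longrightarrow> map \<alpha> x \<in> bar_lists G n"
  using ac by (auto simp: bar_lists_def)

lemma bar_linear_bar_push: "bar_linear G M n (bar_chains G M n) (\<lambda>x m. single M (map \<alpha> x) (id m))"
proof -
  interpret M: comm_group M by (rule M)
  interpret C: comm_group "bar_chains G M n" by (rule comm_group_bar_chains[OF M])
  show ?thesis
  proof (rule bar_linear.intro)
    show "comm_group M" by (rule M)
    show "comm_monoid (bar_chains G M n)" by (rule C.comm_monoid_axioms)
  qed (auto intro: single_in_bar_chains map_in_bar_lists M.monoid_axioms simp: single_one
      single_mult[OF M.monoid_axioms])
qed

lemma bar_face_map:
  assumes x: "x \<in> bar_lists G (Suc n)" and i: "i \<le> Suc n"
  shows "bar_face G (Suc n) i (map \<alpha> x) = map \<alpha> (bar_face G (Suc n) i x)"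
proof -
  have lx: "length x = Suc n" and sx: "set x \<subseteq> carrier G" using x by (auto simp: bar_lists_def)
  consider "i = 0" | "i = Suc n" | "0 < i" "i \<le> n" using i by linarith
  then show ?thesis
  proof cases
    case 1 then show ?thesis by (simp add: bar_face_def map_tl)
  next
    case 2 then show ?thesis by (simp add: bar_face_def map_butlast)
  next
    case 3
    have a: "x ! (i - 1) \<in> carrier G" "x ! i \<in> carrier G" using 3 lx sx
      by (auto intro!: subsetD[OF sx] nth_mem)
    have "map \<alpha> x ! (i - 1) = \<alpha> (x ! (i - 1))" "map \<alpha> x ! i = \<alpha> (x ! i)" using 3 lx by auto
    then show ?thesis using 3 am[OF a] by (simp add: bar_face_def take_map drop_map)
  qed
qed

lemma bar_push_bar_bd_gen:
  assumes x: "x \<in> bar_lists G (Suc n)" and m: "m \<in> carrier M"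
  shows "bar_push G M G M n \<alpha> id (bar_bd_gen G M trivial_action n x m)
      = bar_bd_gen G M trivial_action n (map \<alpha> x) m"
proof -
  interpret M: comm_group M by (rule M)
  interpret C: comm_group "bar_chains G M n" by (rule comm_group_bar_chains[OF M])
  interpret P: bar_linear G M n "bar_chains G M n" "\<lambda>x m. single M (map \<alpha> x) (id m)"
    by (rule bar_linear_bar_push)
  let ?c = "\<lambda>i. if even i then m else inv\<^bsub>M\<^esub> m"
  have c: "?c i \<in> carrier M" for i using m by simp
  have face: "bar_face G (Suc n) i x \<in> bar_lists G n" if "i \<in> {0..Suc n}" for i
    using that by (intro bar_face_in_bar_lists[OF G x]) simp
  have "bar_push G M G M n \<alpha> id (bar_bd_gen G M trivial_action n x m)
      = finprod (bar_chains G M n) (\<lambda>i. bar_push G M G M n \<alpha> id (single M (bar_face G (Suc n) i x)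
        (?c i))) {0..Suc n}"
    unfolding bar_bd_gen_def bar_coef_trivial bar_push_lin_ext
    by (rule P.lin_ext_finprod) (use face m in \<open>auto intro!: single_in_bar_chains M.monoid_axioms\<close>)
  also have "\<dots> = finprod (bar_chains G M n) (\<lambda>i. single M (bar_face G (Suc n) i (map \<alpha> x)) (?c i))
      {0..Suc n}"
  proof (rule C.finprod_cong')
    fix i assume i: "i \<in> {0..Suc n}"
    have "bar_push G M G M n \<alpha> id (single M (bar_face G (Suc n) i x) (?c i))
        = single M (map \<alpha> (bar_face G (Suc n) i x)) (id (?c i))"
      unfolding bar_push_lin_ext by (rule P.lin_ext_single[OF face[OF i] c])
    then show "bar_push G M G M n \<alpha> id (single M (bar_face G (Suc n) i x) (?c i))
        = single M (bar_face G (Suc n) i (map \<alpha> x)) (?c i)"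
      using i by (simp add: bar_face_map[OF x])
  next
    show "(\<lambda>i. single M (bar_face G (Suc n) i (map \<alpha> x)) (?c i)) \<in> {0..Suc n}
        \<rightarrow> carrier (bar_chains G M n)"
      using bar_face_in_bar_lists[OF G map_in_bar_lists[OF x]] m
      by (auto intro!: single_in_bar_chains M.monoid_axioms)
  qed simp
  also have "\<dots> = bar_bd_gen G M trivial_action n (map \<alpha> x) m"
    by (simp add: bar_bd_gen_def bar_coef_trivial)
  finally show ?thesis .
qed

lemma bar_push_bar_bd:
  assumes f: "f \<in> carrier (bar_chains G M (Suc n))"
  shows "bar_push G M G M n \<alpha> id (bar_bd G M trivial_action (Suc n) f)
       = bar_bd G M trivial_action (Suc n) (bar_push G M G M (Suc n) \<alpha> id f)"
proof -
  interpret C0: comm_group "bar_chains G M n" by (rule comm_group_bar_chains[OF M])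
  interpret P0: bar_linear G M n "bar_chains G M n" "\<lambda>x m. single M (map \<alpha> x) (id m)"
    by (rule bar_linear_bar_push)
  interpret P1: bar_linear G M "Suc n" "bar_chains G M (Suc n)" "\<lambda>x m. single M (map \<alpha> x) (id m)"
    by (rule bar_linear_bar_push)
  interpret BD: bar_linear G M "Suc n" "bar_chains G M n" "bar_bd_gen G M trivial_action n"
    by (rule bar_linear_bar_bd_gen[OF M G])
  have "bar_push G M G M n \<alpha> id (bar_bd G M trivial_action (Suc n) f)
      = lin_ext (bar_chains G M n) M
          (\<lambda>x m. bar_push G M G M n \<alpha> id (bar_bd_gen G M trivial_action n x m)) f"
    unfolding bar_bd_lin_ext bar_push_lin_ext by (rule P0.lin_ext_comp[OF f BD.Tc])
  also have "\<dots> = lin_ext (bar_chains G M n) M (\<lambda>x m. bar_bd_gen G M trivial_action n (map \<alpha> x) m) f"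
    by (rule lin_ext_cong[OF C0.comm_monoid_axioms f])
      (simp_all add: bar_push_bar_bd_gen BD.Tc map_in_bar_lists)
  also have "\<dots> = lin_ext (bar_chains G M n) M
      (\<lambda>x m. bar_bd G M trivial_action (Suc n) (single M (map \<alpha> x) m)) f"
    by (rule lin_ext_cong[OF C0.comm_monoid_axioms f])
      (simp_all add: bar_bd_lin_ext BD.lin_ext_single BD.Tc map_in_bar_lists)
  also have "\<dots> = bar_bd G M trivial_action (Suc n) (bar_push G M G M (Suc n) \<alpha> id f)"
    unfolding bar_bd_lin_ext bar_push_lin_ext
    by (subst BD.lin_ext_comp[OF f]) (simp_all add: P1.Tc[simplified])
  finally show ?thesis .
qed

lemma bar_push_closed: "f \<in> carrier (bar_chains G M n)
    \<Longrightarrow> bar_push G M G M n \<alpha> id f \<in> carrier (bar_chains G M n)"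
  unfolding bar_push_lin_ext by (rule bar_linear.lin_ext_closed[OF bar_linear_bar_push])

lemma bar_push_mult: "f \<in> carrier (bar_chains G M n) \<Longrightarrow> g \<in> carrier (bar_chains G M n) \<Longrightarrow>
   bar_push G M G M n \<alpha> id (f \<otimes>\<^bsub>bar_chains G M n\<^esub> g) = bar_push G M G M n \<alpha> id f \<otimes>\<^bsub>bar_chains G M n\<^esub>
       bar_push G M G M n \<alpha> id g"
  unfolding bar_push_lin_ext by (rule bar_linear.lin_ext_mult[OF bar_linear_bar_push])

lemma bar_push_boundaries:
    "b \<in> bar_boundaries G M trivial_action n
        \<Longrightarrow> bar_push G M G M n \<alpha> id b \<in> bar_boundaries G M trivial_action n"
  unfolding bar_boundaries_def using bar_push_bar_bd bar_push_closed by fastforce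

lemma bar_push_cycles:
  assumes c: "c \<in> bar_cycles G M trivial_action n"
  shows "bar_push G M G M n \<alpha> id c \<in> bar_cycles G M trivial_action n"
proof (cases n)
  case 0
  then show ?thesis using c bar_push_closed by (simp add: bar_cycles_def)
next
  case (Suc k)
  then have cc: "c \<in> carrier (bar_chains G M (Suc k))"
    "bar_bd G M trivial_action (Suc k) c = \<one>\<^bsub>bar_chains G M k\<^esub>"
    using c by (auto simp: bar_cycles_def)
  have "bar_bd G M trivial_action (Suc k) (bar_push G M G M (Suc k) \<alpha> id c)
      = bar_push G M G M k \<alpha> id \<one>\<^bsub>bar_chains G M k\<^esub>"
    using bar_push_bar_bd[OF cc(1)] cc(2) by simp
  also have "\<dots> = \<one>\<^bsub>bar_chains G M k\<^esub>"
    unfolding bar_push_lin_ext by (rule bar_linear.lin_ext_one[OF bar_linear_bar_push])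
  finally show ?thesis using Suc bar_push_closed[OF cc(1)] by (simp add: bar_cycles_def)
qed

lemma homology_map_endo_closed:
  assumes Xc: "Xc \<in> carrier (group_homology G M trivial_action n)"
  shows "homology_map G M trivial_action n (bar_push G M G M n \<alpha> id) Xc
      \<in> carrier (group_homology G M trivial_action n)"
proof -
  interpret C: comm_group "bar_chains G M n" by (rule comm_group_bar_chains[OF M])
  obtain c where c: "c \<in> bar_cycles G M trivial_action n"
    and Xc_eq: "Xc = homology_class G M trivial_action n c"
    using Xc unfolding carrier_group_homology by blast
  have "c \<in> carrier (bar_chains G M n)"
    using subgroup.subset[OF trivial_cycles_subgroup[OF M G]] c by blast
  moreover have "bar_push G M G M n \<alpha> id \<in> hom (bar_chains G M n) (bar_chains G M n)"
    by (intro homI bar_push_closed bar_push_mult)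
  ultimately have "homology_map G M trivial_action n (bar_push G M G M n \<alpha> id) Xc
      = homology_class G M trivial_action n (bar_push G M G M n \<alpha> id c)"
    unfolding Xc_eq
    using bar_push_boundaries
    by (intro homology_map_rcoset C.is_group trivial_boundaries_subgroup[OF M G]) auto
  then show ?thesis unfolding carrier_group_homology using bar_push_cycles[OF c] by blast
qed

end


section \<open>Vanishing coefficient maps\<close>

lemma bar_bd_closed:
  assumes M: "comm_group M" and Q: "group Q"
    and \<phi>c: "\<And>c m. c \<in> carrier Q \<Longrightarrow> m \<in> carrier M \<Longrightarrow> \<phi> c m \<in> carrier M"
    and f: "f \<in> carrier (bar_chains Q M (Suc n))"
  shows "bar_bd Q M \<phi> (Suc n) f \<in> carrier (bar_chains Q M n)"
proof -
  interpret M: comm_group M by (rule M)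
  interpret Q: group Q by (rule Q)
  interpret C: comm_group "bar_chains Q M n" by (rule comm_group_bar_chains[OF M])
  have cc: "bar_coef Q M \<phi> i x m \<in> carrier M" if "x \<in> bar_lists Q (Suc n)" "m \<in> carrier M" for i x m
  proof -
    have "hd x \<in> set x" using that(1) by (cases x) (auto simp: bar_lists_def)
    then have "hd x \<in> carrier Q" using that(1) by (auto simp: bar_lists_def)
    then show ?thesis using that \<phi>c by (simp add: bar_coef_def)
  qed
  have Tc: "bar_bd_gen Q M \<phi> n x m \<in> carrier (bar_chains Q M n)" if "x \<in> bar_lists Q (Suc n)"
      "m \<in> carrier M" for x m
    unfolding bar_bd_gen_def
    by (rule C.finprod_closed)
    (use that cc in \<open>auto intro!: single_in_bar_chains[OF M.monoid_axioms] bar_face_in_bar_lists\<close>)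
  have "(\<lambda>x. bar_bd_gen Q M \<phi> n x (f x)) \<in> supp M f \<rightarrow> carrier (bar_chains Q M n)"
    using f Tc by (auto simp: in_bar_chains_iff)
  then show ?thesis unfolding bar_bd_lin_ext lin_ext_def by (rule C.finprod_closed)
qed

lemma boundaries_subset_bar_chains:
  assumes M: "comm_group M" and Q: "group Q"
    and \<phi>c: "\<And>c m. c \<in> carrier Q \<Longrightarrow> m \<in> carrier M \<Longrightarrow> \<phi> c m \<in> carrier M"
  shows "bar_boundaries Q M \<phi> n \<subseteq> carrier (bar_chains Q M n)"
  unfolding bar_boundaries_def using bar_bd_closed[where \<phi>=\<phi>, OF M Q \<phi>c] by blast

lemma one_in_boundaries:
  assumes M: "comm_group M"
  shows "\<one>\<^bsub>bar_chains Q M n\<^esub> \<in> bar_boundaries Q M \<phi> n"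
proof -
  interpret C: comm_group "bar_chains Q M n" by (rule comm_group_bar_chains[OF M])
  interpret C1: comm_group "bar_chains Q M (Suc n)" by (rule comm_group_bar_chains[OF M])
  have "supp M \<one>\<^bsub>bar_chains Q M (Suc n)\<^esub> = {}" by (simp add: bar_chains_simps supp_def)
  then have "bar_bd Q M \<phi> (Suc n) \<one>\<^bsub>bar_chains Q M (Suc n)\<^esub> = \<one>\<^bsub>bar_chains Q M n\<^esub>"
    by (simp add: bar_bd_def)
  then show ?thesis unfolding bar_boundaries_def using C1.one_closed by force
qed

lemma homology_map_trivial_coefficients:
  assumes M1: "comm_group M1" and M2: "comm_group M2" and Q1: "group Q1" and Q2: "group Q2"
    and \<phi>1: "\<And>c m. c \<in> carrier Q1 \<Longrightarrow> m \<in> carrier M1 \<Longrightarrow> \<phi>1 c m \<in> carrier M1"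
    and \<phi>2: "\<And>c m. c \<in> carrier Q2 \<Longrightarrow> m \<in> carrier M2 \<Longrightarrow> \<phi>2 c m \<in> carrier M2"
    and \<beta>: "\<And>m. m \<in> carrier M1 \<Longrightarrow> \<beta> m = \<one>\<^bsub>M2\<^esub>"
    and Xc: "Xc \<in> carrier (group_homology Q1 M1 \<phi>1 n)"
  shows "homology_map Q2 M2 \<phi>2 n (bar_push Q1 M1 Q2 M2 n \<gamma> \<beta>) Xc = \<one>\<^bsub>group_homology Q2 M2 \<phi>2 n\<^esub>"
proof -
  interpret C1: comm_group "bar_chains Q1 M1 n" by (rule comm_group_bar_chains[OF M1])
  interpret C2: comm_group "bar_chains Q2 M2 n" by (rule comm_group_bar_chains[OF M2])
  obtain a where a: "a \<in> bar_cycles Q1 M1 \<phi>1 n" and Xc_eq: "Xc = homology_class Q1 M1 \<phi>1 n a"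
    using Xc unfolding carrier_group_homology by blast
  have "a \<in> carrier (bar_chains Q1 M1 n)" using a by (simp add: bar_cycles_def split: if_splits)
  then have "a \<in> Xc" "Xc \<subseteq> carrier (bar_chains Q1 M1 n)"
    unfolding Xc_eq using one_in_boundaries[OF M1] boundaries_subset_bar_chains[OF M1 Q1 \<phi>1]
    by (force simp: r_coset_def, simp add: C1.r_coset_subset_G)
  then have "(SOME k. k \<in> Xc) \<in> carrier (bar_chains Q1 M1 n)" by (metis someI subsetD)
  then have "bar_push Q1 M1 Q2 M2 n \<gamma> \<beta> (SOME k. k \<in> Xc) = \<one>\<^bsub>bar_chains Q2 M2 n\<^esub>"
    unfolding bar_push_def by (intro C2.finprod_one_eqI) (simp add: \<beta> in_bar_chains_iff single_one)
  then show ?thesis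
    using boundaries_subset_bar_chains[OF M2 Q2 \<phi>2]
    by (simp add: homology_map_def group_homology_def)
qed


lemma comm_group_Fp: "comm_group (Fp p)"
  by (rule abelian_group.a_comm_group[OF ring.is_abelian_group[OF cring.axioms(1)]])
    (rule ZFact_is_cring)

lemma (in group) conj_mult:
  assumes "u \<in> carrier G" "a \<in> carrier G" "b \<in> carrier G"
  shows "u \<otimes> (a \<otimes> b) \<otimes> inv u = (u \<otimes> a \<otimes> inv u) \<otimes> (u \<otimes> b \<otimes> inv u)"
proof -
  have "inv u \<otimes> (u \<otimes> y) = y" if "y \<in> carrier G" for y
    using assms(1) that by (simp add: m_assoc[symmetric])
  then show ?thesis using assms by (simp add: m_assoc)
qed

context
  fixes B :: "('g,'a) monoid_scheme" and A :: "'g set" and p j :: nat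
  assumes B: "group B" and A: "subgroup A B"
begin

lemma monoid_restrict_Int: "subgroup U B \<Longrightarrow> monoid (B\<lparr>carrier := U \<inter> A\<rparr>)"
  using A by (intro group.is_monoid group.subgroup_imp_group B group.subgroups_Inter_pair)

lemma comm_group_H_in: "subgroup U B \<Longrightarrow> comm_group (H_in B A p j U)"
  unfolding H_in_def by (rule trivial_homology_comm_group[OF comm_group_Fp monoid_restrict_Int])

lemma carrier_H_in: "subgroup U B \<Longrightarrow> carrier (H_in B A p j U) =
  homology_class (B\<lparr>carrier := U \<inter> A\<rparr>) (Fp p) trivial_action j
     ` bar_cycles (B\<lparr>carrier := U \<inter> A\<rparr>) (Fp p) trivial_action j"
  unfolding H_in_def by (rule carrier_group_homology)

lemma H_in_map_class:
  assumes W: "subgroup W B" and U: "subgroup U B" and WU: "W \<subseteq> U"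
    and c: "c \<in> bar_cycles (B\<lparr>carrier := W \<inter> A\<rparr>) (Fp p) trivial_action j"
  shows "H_in_map B A p j W U (homology_class (B\<lparr>carrier := W \<inter> A\<rparr>) (Fp p) trivial_action j c)
       = homology_class (B\<lparr>carrier := U \<inter> A\<rparr>) (Fp p) trivial_action j c"
    and "c \<in> bar_cycles (B\<lparr>carrier := U \<inter> A\<rparr>) (Fp p) trivial_action j"
proof -
  have sub: "carrier (B\<lparr>carrier := W \<inter> A\<rparr>) \<subseteq> carrier (B\<lparr>carrier := U \<inter> A\<rparr>)" using WU by auto
  have mm: "monoid.mult (B\<lparr>carrier := W \<inter> A\<rparr>) = monoid.mult (B\<lparr>carrier := U \<inter> A\<rparr>)" by simp
  show "H_in_map B A p j W U (homology_class (B\<lparr>carrier := W \<inter> A\<rparr>) (Fp p) trivial_action j c)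
       = homology_class (B\<lparr>carrier := U \<inter> A\<rparr>) (Fp p) trivial_action j c"
    unfolding H_in_map_def
    by (rule homology_map_inclusion[OF comm_group_Fp monoid_restrict_Int[OF W]
        monoid_restrict_Int[OF U] sub mm c])
  show "c \<in> bar_cycles (B\<lparr>carrier := U \<inter> A\<rparr>) (Fp p) trivial_action j"
    using trivial_cycles_mono[OF comm_group_Fp monoid_restrict_Int[OF W] monoid_restrict_Int[OF U]
        sub mm] c by blast
qed

lemma H_in_map_closed:
  assumes W: "subgroup W B" and U: "subgroup U B" and WU: "W \<subseteq> U"
    and y: "y \<in> carrier (H_in B A p j W)"
  shows "H_in_map B A p j W U y \<in> carrier (H_in B A p j U)"
proof -
  obtain c where c: "c \<in> bar_cycles (B\<lparr>carrier := W \<inter> A\<rparr>) (Fp p) trivial_action j"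
    "y = homology_class (B\<lparr>carrier := W \<inter> A\<rparr>) (Fp p) trivial_action j c"
    using y unfolding carrier_H_in[OF W] by (rule imageE) simp
  show ?thesis unfolding c(2) H_in_map_class(1)[OF W U WU c(1)] carrier_H_in[OF U]
    using H_in_map_class(2)[OF W U WU c(1)] by (rule imageI)
qed

lemma H_in_map_comp:
  assumes U1: "subgroup U1 B" and U2: "subgroup U2 B" and U3: "subgroup U3 B"
    and "U1 \<subseteq> U2" "U2 \<subseteq> U3" and y: "y \<in> carrier (H_in B A p j U1)"
  shows "H_in_map B A p j U2 U3 (H_in_map B A p j U1 U2 y) = H_in_map B A p j U1 U3 y"
proof -
  obtain c where c: "c \<in> bar_cycles (B\<lparr>carrier := U1 \<inter> A\<rparr>) (Fp p) trivial_action j"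
    "y = homology_class (B\<lparr>carrier := U1 \<inter> A\<rparr>) (Fp p) trivial_action j c"
    using y unfolding carrier_H_in[OF U1] by (rule imageE) simp
  have "U1 \<subseteq> U3" using assms by blast
  show ?thesis
    unfolding c(2) H_in_map_class(1)[OF U1 U2 \<open>U1 \<subseteq> U2\<close> c(1)]
      H_in_map_class(1)[OF U1 U3 \<open>U1 \<subseteq> U3\<close> c(1)]
    using H_in_map_class(1)[OF U2 U3 \<open>U2 \<subseteq> U3\<close> H_in_map_class(2)[OF U1 U2 \<open>U1 \<subseteq> U2\<close> c(1)]] .
qed

lemma group_Quo:
  assumes U: "subgroup U B" and N: "A \<lhd> B"
  shows "group (Quo B A U)"
proof -
  have "(A \<inter> U) \<lhd> B\<lparr>carrier := U\<rparr>" by (rule group.normal_Int_subgroup[OF B U N])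
  then show ?thesis unfolding Quo_def by (simp add: Int_commute normal.factorgroup_is_group)
qed

lemma conj_act_closed:
  assumes U: "subgroup U B" and N: "A \<lhd> B"
    and c: "c \<in> carrier (Quo B A U)" and m: "m \<in> carrier (H_in B A p j U)"
  shows "conj_act B A p j U c m \<in> carrier (H_in B A p j U)"
proof -
  interpret B: group B by (rule B)
  obtain a where a: "a \<in> U" "c = (U \<inter> A) #>\<^bsub>B\<^esub> a"
    using c unfolding Quo_def carrier_FactGroup_upd by blast
  then obtain h where h: "h \<in> U \<inter> A" "(SOME u. u \<in> c) = h \<otimes>\<^bsub>B\<^esub> a"
    using B.some_in_rcoset[OF B.subgroups_Inter_pair[OF U A]] subgroup.subset[OF U] by blast
  define u where "u = (SOME u. u \<in> c)"
  have uU: "u \<in> U" using h a U unfolding u_def by (simp add: subgroup.m_closed)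
  have uc: "u \<in> carrier B" using uU subgroup.subset[OF U] by blast
  let ?G = "B\<lparr>carrier := U \<inter> A\<rparr>"
  let ?\<alpha> = "\<lambda>g. u \<otimes>\<^bsub>B\<^esub> g \<otimes>\<^bsub>B\<^esub> inv\<^bsub>B\<^esub> u"
  have "?\<alpha> g \<in> carrier ?G" if "g \<in> carrier ?G" for g
    using that uU U normal.inv_op_closed2[OF N uc] subgroup.subset[OF U]
    by (simp add: subgroup.m_closed subgroup.m_inv_closed)
  moreover have "?\<alpha> (g1 \<otimes>\<^bsub>?G\<^esub> g2) = ?\<alpha> g1 \<otimes>\<^bsub>?G\<^esub> ?\<alpha> g2"
    if "g1 \<in> carrier ?G" "g2 \<in> carrier ?G" for g1 g2
    using that subgroup.subset[OF A] uc by (simp add: B.conj_mult subset_iff)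
  ultimately have "homology_map ?G (Fp p) trivial_action j (bar_push ?G (Fp p) ?G (Fp p) j ?\<alpha> id) m
      \<in> carrier (group_homology ?G (Fp p) trivial_action j)"
    using m by (intro homology_map_endo_closed comm_group_Fp monoid_restrict_Int U)
      (simp_all add: H_in_def)
  then show ?thesis unfolding conj_act_def H_in_def u_def Let_def by simp
qed

lemma one_in_carrier_H_in: "subgroup U B \<Longrightarrow> \<one>\<^bsub>H_in B A p j U\<^esub> \<in> carrier (H_in B A p j U)"
  using comm_group_H_in by (simp add: comm_group.axioms(2) group.is_monoid monoid.one_closed)

lemma H_out_map_eq_one:
  assumes N: "A \<lhd> B" and U: "subgroup U B" and V: "subgroup V B"
    and triv: "\<And>m. m \<in> carrier (H_in B A p j V) \<Longrightarrow> H_in_map B A p j V U m = \<one>\<^bsub>H_in B A p j U\<^esub>"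
    and y: "y \<in> carrier (H_out B A p i j V)"
  shows "H_out_map B A p i j V U y = \<one>\<^bsub>H_out B A p i j U\<^esub>"
proof -
  have "y \<in> carrier (group_homology (Quo B A V) (H_in B A p j V) (conj_act B A p j V) i)"
    using y by (simp only: H_out_def)
  then show ?thesis
    unfolding H_out_map_def H_out_def
    by (intro homology_map_trivial_coefficients comm_group_H_in group_Quo U V N triv)
      (simp_all add: conj_act_closed U V N)
qed

end


theorem proposition3p3:
  fixes B :: "('g, 'a) monoid_scheme" and C :: "('c, 'b) monoid_scheme"
    and A :: "'g set" and q :: "'g \<Rightarrow> 'c"
    and p i j :: nat and T :: "'g set set"
  assumes "group B" and "group C"
    and "subgroup A B"
    and "q \<in> hom B C" and "q ` carrier B = carrier C" and "kernel B C q = A"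
    and "Factorial_Ring.prime p"
    and "\<forall>U\<in>T. subgroup U B"
    and "\<forall>U1\<in>T. \<forall>U2\<in>T. \<exists>U\<in>T. U \<subseteq> U1 \<inter> U2"
    and "\<forall>U\<in>T. finite (carrier (H_in B A p j U))"
    and "inv_lim_zero T (H_in B A p j) (H_in_map B A p j)"
  shows "inv_lim_zero T (H_out B A p i j) (H_out_map B A p i j)"
proof -
  note B = assms(1) and A = assms(3) and sub = assms(8)[rule_format]
  have N: "A \<lhd> B"
    using group_hom.normal_kernel[of B C q] assms(1,2,4,6)
    by (simp add: group_hom_def group_hom_axioms_def)
  show ?thesis unfolding inv_lim_zero_def
  proof (intro allI impI ballI)
    fix x U
    assume x: "(\<forall>U\<in>T. x U \<in> carrier (H_out B A p i j U)) \<and>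
        (\<forall>U1\<in>T. \<forall>U2\<in>T. U1 \<subseteq> U2 \<longrightarrow> H_out_map B A p i j U1 U2 (x U1) = x U2)"
      and U: "U \<in> T"
    obtain V where V: "V \<in> T" "V \<subseteq> U"
      and triv: "\<forall>m\<in>carrier (H_in B A p j V). H_in_map B A p j V U m = \<one>\<^bsub>H_in B A p j U\<^esub>"
      using inv_lim_zero_imp_transition_eventually_trivial[OF assms(9) assms(10)[rule_format]
          one_in_carrier_H_in[OF B A sub] H_in_map_closed[OF B A sub sub]
          H_in_map_comp[OF B A sub sub sub] assms(11) U]
      by blast
    have "x U = H_out_map B A p i j V U (x V)" using x U V by simp
    also have "\<dots> = \<one>\<^bsub>H_out B A p i j U\<^esub>"
      by (rule H_out_map_eq_one[OF B A N sub[OF U] sub[OF V(1)]]) (use triv x V(1) in auto)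
    finally show "x U = \<one>\<^bsub>H_out B A p i j U\<^esub>" .
  qed
qed

end
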